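(* Let $D\in\mathcal{O}_d$ be a discriminant and let $\epsilon_D=\frac12(t_0+u_0\sqrt{D})$ be a fundamental solution of $t^2-u^2D=4$. For $n\ge 0$ write $\epsilon_D^{\,n+1}=\frac12(t_n+u_n\sqrt{D})$ with $t_n,u_n\in\mathcal{O}_d$. Then for every $n\ge 0$, $$|t_n|^2-3<|\epsilon_D|^{2(n+1)}<|t_n|^2+3.$$
   Context: Let $d>0$ be a square-free rational integer, $k_d=\mathbb{Q}(\sqrt{-d})$, and $\mathcal{O}_d$ its ring of integers. An element $D\in\mathcal{O}_d$ is a discriminant if $D$ is not a perfect square in $\mathcal{O}_d$ and $D\equiv x^2 \pmod{4\mathcal{O}_d}$ for some $x\in\mathcal{O}_d$. The square root $\sqrt{D}$ is chosen with argument in $[0,\pi)$. For a solution $(t,u)\in\mathcal{O}_d^2$ of $t^2-u^2D=4$ set $\epsilon_{t,u}=\frac12(t+u\sqrt{D})$. A solution $(t_0,u_0)$ is fundamental if $|\epsilon_{t_0,u_0}|$ is the smallest value larger than $1$ among all $|\epsilon_{t,u}|$ for solutions $(t,u)$; then one writes $\epsilon_D=\epsilon_{t_0,u_0}$. *)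

theory Defs
  imports "HOL-Analysis.Analysis" "HOL-Computational_Algebra.Squarefree"
begin

text \<open>The ring of integers of k_d = Q(sqrt(-d)), d > 0 squarefree, embedded in the complex
numbers via sqrt(-d) = i * sqrt d: it is Z[omega] with omega = sqrt(-d) if d is not
congruent to 3 mod 4, and omega = (1 + sqrt(-d))/2 if d is congruent to 3 mod 4.\<close>

definition omega_d :: "int \<Rightarrow> complex" where
  "omega_d d = (if d mod 4 = 3 then (1 + \<i> * complex_of_real (sqrt (real_of_int d))) / 2
                else \<i> * complex_of_real (sqrt (real_of_int d)))"

definition ring_of_integers :: "int \<Rightarrow> complex set" where
  "ring_of_integers d = {of_int a + of_int b * omega_d d | a b. True}"

definition is_discriminant :: "int \<Rightarrow> complex \<Rightarrow> bool" where
  "is_discriminant d D \<longleftrightarrow> D \<in> ring_of_integers d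
     \<and> \<not> (\<exists>y \<in> ring_of_integers d. D = y ^ 2)
     \<and> (\<exists>x \<in> ring_of_integers d. (D - x ^ 2) / 4 \<in> ring_of_integers d)"

definition sqrt_disc :: "complex \<Rightarrow> complex" where
  "sqrt_disc D = (THE w. w ^ 2 = D \<and> 0 \<le> Arg w \<and> Arg w < pi)"

definition pell_solution :: "int \<Rightarrow> complex \<Rightarrow> complex \<Rightarrow> complex \<Rightarrow> bool" where
  "pell_solution d D t u \<longleftrightarrow> t \<in> ring_of_integers d \<and> u \<in> ring_of_integers d
     \<and> t ^ 2 - u ^ 2 * D = 4"

definition eps :: "complex \<Rightarrow> complex \<Rightarrow> complex \<Rightarrow> complex" where
  "eps D t u = (t + u * sqrt_disc D) / 2"

definition fundamental_solution :: "int \<Rightarrow> complex \<Rightarrow> complex \<Rightarrow> complex \<Rightarrow> bool" where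
  "fundamental_solution d D t0 u0 \<longleftrightarrow> pell_solution d D t0 u0 \<and> cmod (eps D t0 u0) > 1
     \<and> (\<forall>t u. pell_solution d D t u \<and> cmod (eps D t u) > 1
               \<longrightarrow> cmod (eps D t0 u0) \<le> cmod (eps D t u))"

end

theory Submission
  imports Defs
begin

(* D is not a square in O_d and O_d is integrally closed in k_d = Q(sqrt(-d)), so
   sqrt D is not in k_d and coordinates over k_d with respect to 1, sqrt D are unique.
   Hence the conjugation sqrt D -> -sqrt D is compatible with taking powers of eps_D; since
   the Pell equation says that eps_D times its conjugate is 1, t_n = z + 1/z with
   z = eps_D^(n+1).  For |z| > 1 the triangle inequality squeezes |z + 1/z|^2 between
   |z|^2 - 2 + |z|^-2 and |z|^2 + 2 + |z|^-2, where 0 < |z|^-2 < 1. *)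

lemma Arg_nonneg_less_pi_iff: "0 \<le> Arg z \<and> Arg z < pi \<longleftrightarrow> Im z > 0 \<or> (Im z = 0 \<and> Re z \<ge> 0)"
  using Arg_le_pi[of z] Arg_eq_pi[of z] Arg_less_0[of z] by auto

lemma sqrt_disc_power2: "sqrt_disc D ^ 2 = D"
proof -
  let ?P = "\<lambda>w. w ^ 2 = D \<and> 0 \<le> Arg w \<and> Arg w < pi"
  obtain c where c: "c ^ 2 = D" using power2_csqrt by blast
  have "?P c \<or> ?P (- c)"
    using c by (auto simp: Arg_nonneg_less_pi_iff)
  moreover have "w = w'" if "?P w" "?P w'" for w w'
  proof -
    from that have "w' = w \<or> w' = - w" by (auto simp: power2_eq_iff)
    then show ?thesis using that by (auto simp: Arg_nonneg_less_pi_iff complex_eq_iff)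
  qed
  ultimately have "\<exists>!w. ?P w" by blast
  from theI'[OF this] show ?thesis unfolding sqrt_disc_def by simp
qed

lemma Ints_of_squarefree_times_square:
  fixes q :: real
  assumes "squarefree d" "q \<in> \<rat>" "of_int d * q ^ 2 \<in> \<int>"
  shows "q \<in> \<int>"
proof -
  obtain a b :: int where ab: "b > 0" "coprime a b" "q = of_int a / of_int b"
    using Rats_cases'[OF assms(2)] by blast
  obtain k :: int where "of_int d * q ^ 2 = of_int k" using assms(3) Ints_cases by metis
  then have "real_of_int (d * a ^ 2) = of_int (k * b ^ 2)"
    using ab(1) unfolding ab(3) by (simp add: field_simps)
  then have "b ^ 2 dvd d * a ^ 2" by (metis dvd_triv_right of_int_eq_iff)
  moreover have "coprime (b ^ 2) (a ^ 2)" using ab(2) by (simp add: coprime_commute)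
  ultimately have "b ^ 2 dvd d" using coprime_dvd_mult_left_iff by blast
  then have "b dvd 1" by (rule squarefreeD[OF assms(1)])
  then have "b = 1" using ab(1) by simp
  then show ?thesis using ab(3) by simp
qed

definition ring_of_integers_parity :: "int \<Rightarrow> int \<Rightarrow> int \<Rightarrow> bool" where
  "ring_of_integers_parity d M K \<longleftrightarrow> (if d mod 4 = 3 then even (M - K) else even M \<and> even K)"

lemma ring_of_integers_iff:
  "z \<in> ring_of_integers d \<longleftrightarrow>
     (\<exists>M K. z = (of_int M + of_int K * \<i> * sqrt (real_of_int d)) / 2 \<and> ring_of_integers_parity d M K)"
proof
  assume "z \<in> ring_of_integers d"
  then obtain a b where z: "z = of_int a + of_int b * omega_d d"
    unfolding ring_of_integers_def by blast
  show "\<exists>M K. z = (of_int M + of_int K * \<i> * sqrt (real_of_int d)) / 2 \<and> ring_of_integers_parity d M K"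
  proof (cases "d mod 4 = 3")
    case True
    then show ?thesis
      by (intro exI[of _ "2 * a + b"] exI[of _ b])
        (simp add: z omega_d_def ring_of_integers_parity_def complex_eq_iff)
  next
    case False
    then show ?thesis
      by (intro exI[of _ "2 * a"] exI[of _ "2 * b"])
        (simp add: z omega_d_def ring_of_integers_parity_def complex_eq_iff)
  qed
next
  assume "\<exists>M K. z = (of_int M + of_int K * \<i> * sqrt (real_of_int d)) / 2 \<and> ring_of_integers_parity d M K"
  then obtain M K where z: "z = (of_int M + of_int K * \<i> * sqrt (real_of_int d)) / 2"
    and parity: "ring_of_integers_parity d M K" by blast
  have "\<exists>a b. z = of_int a + of_int b * omega_d d"
  proof (cases "d mod 4 = 3")
    case True
    then have "even (M - K)" using parity unfolding ring_of_integers_parity_def by simp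
    then obtain c where "M - K = 2 * c" by blast
    then have "real_of_int M = of_int K + 2 * of_int c" by linarith
    then show ?thesis using True
      by (intro exI[of _ c] exI[of _ K]) (simp add: z omega_d_def complex_eq_iff)
  next
    case False
    then obtain a b where "M = 2 * a" "K = 2 * b" using parity unfolding ring_of_integers_parity_def
      by (meson evenE)
    then show ?thesis using False
      by (intro exI[of _ a] exI[of _ b]) (simp add: z omega_d_def complex_eq_iff)
  qed
  then show "z \<in> ring_of_integers d" unfolding ring_of_integers_def by blast
qed

lemma ring_of_integers_parity_sqrt:
  assumes "squarefree d" "M ^ 2 - d * K ^ 2 = 2 * A" "M * K = B"
    and "ring_of_integers_parity d A B"
  shows "ring_of_integers_parity d M K"
proof (cases "d mod 4 = 3")
  case True
  then have "odd d" by presburger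
  have "even (M ^ 2 - d * K ^ 2)" using assms(2) by simp
  then have "even M \<longleftrightarrow> even K" using \<open>odd d\<close> by simp
  then show ?thesis using True unfolding ring_of_integers_parity_def by simp
next
  case False
  then have "even A" "even B" using assms(4) unfolding ring_of_integers_parity_def by auto
  have "even M"
  proof (rule ccontr)
    assume "odd M"
    then have "even K" using \<open>even B\<close> assms(3) by auto
    then have "odd (M ^ 2 - d * K ^ 2)" using \<open>odd M\<close> by simp
    then show False using assms(2) by simp
  qed
  then obtain M' where M': "M = 2 * M'" by blast
  have "even K"
  proof (rule ccontr)
    assume "odd K"
    then have "coprime (2 ^ 2) (K ^ 2)"
      by (simp only: coprime_power_left_iff coprime_power_right_iff coprime_left_2_iff_odd) simp
    moreover obtain A' where "A = 2 * A'" using \<open>even A\<close> by blast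
    then have "d * K ^ 2 = 2 ^ 2 * (M' ^ 2 - A')" using assms(2) unfolding M'
      by (simp add: algebra_simps power2_eq_square)
    then have "2 ^ 2 dvd d * K ^ 2" by simp
    ultimately have "2 ^ 2 dvd d" using coprime_dvd_mult_left_iff by blast
    then have "(2::int) dvd 1" by (rule squarefreeD[OF assms(1)])
    then show False by simp
  qed
  then show ?thesis using False \<open>even M\<close> unfolding ring_of_integers_parity_def by simp
qed

(* k_d = Q(sqrt(-d)) inside the complex numbers, via z = Re z + (Im z / sqrt d) * sqrt(-d). *)
definition quadratic_field :: "int \<Rightarrow> complex set" where
  "quadratic_field d = {z. Re z \<in> \<rat> \<and> Im z / sqrt (real_of_int d) \<in> \<rat>}"

lemma mem_quadratic_field:
  "z \<in> quadratic_field d \<longleftrightarrow> Re z \<in> \<rat> \<and> Im z / sqrt (real_of_int d) \<in> \<rat>"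
  by (simp add: quadratic_field_def)

lemma numeral_in_quadratic_field [simp]: "numeral k \<in> quadratic_field d"
  unfolding mem_quadratic_field by simp

lemma quadratic_field_add: "z \<in> quadratic_field d \<Longrightarrow> w \<in> quadratic_field d \<Longrightarrow> z + w \<in> quadratic_field d"
  unfolding mem_quadratic_field by (simp add: add_divide_distrib)

lemma quadratic_field_diff: "z \<in> quadratic_field d \<Longrightarrow> w \<in> quadratic_field d \<Longrightarrow> z - w \<in> quadratic_field d"
  unfolding mem_quadratic_field by (simp add: diff_divide_distrib)

lemma quadratic_field_mult:
  assumes "d > 0" "z \<in> quadratic_field d" "w \<in> quadratic_field d"
  shows "z * w \<in> quadratic_field d"
proof -
  let ?r = "sqrt (real_of_int d)"
  have r: "?r > 0" "?r * ?r = of_int d" using assms(1) by auto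
  have "Re (z * w) = Re z * Re w - of_int d * (Im z / ?r) * (Im w / ?r)"
    using r by (simp add: field_simps)
  moreover have "Im (z * w) / ?r = Re z * (Im w / ?r) + (Im z / ?r) * Re w"
    using r by (simp add: field_simps)
  ultimately show ?thesis using assms(2,3) unfolding mem_quadratic_field
    by (simp only:) (intro conjI Rats_add Rats_diff Rats_mult Rats_of_int; simp)
qed

lemma quadratic_field_inverse:
  assumes "d > 0" "z \<in> quadratic_field d"
  shows "inverse z \<in> quadratic_field d"
proof -
  let ?r = "sqrt (real_of_int d)"
  let ?N = "Re z ^ 2 + of_int d * (Im z / ?r) ^ 2"
  have r: "?r > 0" "?r * ?r = of_int d" using assms(1) by auto
  have norm: "Re z ^ 2 + Im z ^ 2 = ?N"
    using r by (simp add: field_simps power2_eq_square)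
  have "Re (inverse z) = Re z / ?N" "Im (inverse z) / ?r = - (Im z / ?r) / ?N"
    using norm by (simp_all add: inverse_complex.sel power2_eq_square)
  moreover have "?N \<in> \<rat>" using assms(2) unfolding mem_quadratic_field by simp
  ultimately show ?thesis using assms(2) unfolding mem_quadratic_field
    by (simp only:) (intro conjI Rats_divide; simp)
qed

lemma quadratic_field_divide:
  "d > 0 \<Longrightarrow> z \<in> quadratic_field d \<Longrightarrow> w \<in> quadratic_field d \<Longrightarrow> z / w \<in> quadratic_field d"
  unfolding divide_inverse by (intro quadratic_field_mult quadratic_field_inverse)

lemma ring_of_integers_subset_quadratic_field:
  assumes "d > 0"
  shows "ring_of_integers d \<subseteq> quadratic_field d"
proof
  fix z assume "z \<in> ring_of_integers d"
  then obtain M K where z: "z = (of_int M + of_int K * \<i> * sqrt (real_of_int d)) / 2"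
    unfolding ring_of_integers_iff by blast
  have "Re z = of_int M / 2" "Im z / sqrt (real_of_int d) = of_int K / 2"
    using assms unfolding z by simp_all
  then show "z \<in> quadratic_field d"
    unfolding mem_quadratic_field by (simp only:) (intro conjI Rats_divide Rats_of_int Rats_number_of)
qed

lemma half_integral_if_square_in_ring_of_integers:
  assumes "d > 0" "squarefree d" "s \<in> quadratic_field d" "s ^ 2 \<in> ring_of_integers d"
  obtains M K :: int where "s = (of_int M + of_int K * \<i> * sqrt (real_of_int d)) / 2"
proof -
  let ?r = "sqrt (real_of_int d)"
  have r: "?r > 0" "?r ^ 2 = of_int d" using assms(1) by auto
  define p q where "p = Re s" and "q = Im s / ?r"
  have pq: "p \<in> \<rat>" "q \<in> \<rat>" using assms(3) unfolding mem_quadratic_field p_def q_def by auto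
  have s: "s = Complex p (q * ?r)" using r unfolding p_def q_def by (simp add: complex_eq_iff)
  obtain A B where "s ^ 2 = (of_int A + of_int B * \<i> * ?r) / 2"
    using assms(4) unfolding ring_of_integers_iff by blast
  then have AB: "2 * (p ^ 2 - of_int d * q ^ 2) = of_int A" "4 * p * q = of_int B"
    using r unfolding s by (auto simp: complex_eq_iff power2_eq_square algebra_simps)
  define N where "N = 2 * (p ^ 2 + of_int d * q ^ 2)"
  have "N ^ 2 = (2 * (p ^ 2 - of_int d * q ^ 2)) ^ 2 + of_int d * (4 * p * q) ^ 2"
    unfolding N_def by (simp add: power2_eq_square algebra_simps)
  then have "N ^ 2 = of_int (A ^ 2 + d * B ^ 2)" unfolding AB by simp
  then have N: "N \<in> \<int>"
    using Ints_of_squarefree_times_square[of 1 N] pq unfolding N_def by simp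
  have "of_int 1 * (2 * p) ^ 2 = N + of_int A"
    unfolding N_def AB(1)[symmetric] by (simp add: power2_eq_square algebra_simps)
  then have "2 * p \<in> \<int>"
    using Ints_of_squarefree_times_square[of 1 "2 * p"] pq N by simp
  then obtain M where M: "2 * p = of_int M" by (metis Ints_cases)
  have "of_int d * (2 * q) ^ 2 = N - of_int A"
    unfolding N_def AB(1)[symmetric] by (simp add: power2_eq_square algebra_simps)
  then have "2 * q \<in> \<int>"
    using Ints_of_squarefree_times_square[OF assms(2), of "2 * q"] pq N by simp
  then obtain K where K: "2 * q = of_int K" by (metis Ints_cases)
  have "s = (of_int M + of_int K * \<i> * ?r) / 2"
    using M K unfolding s by (simp add: complex_eq_iff field_simps)
  then show thesis by (rule that)
qed

lemma ring_of_integers_integrally_closed: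
  assumes "d > 0" "squarefree d" "s \<in> quadratic_field d" "s ^ 2 \<in> ring_of_integers d"
  shows "s \<in> ring_of_integers d"
proof -
  let ?r = "sqrt (real_of_int d)"
  have r: "?r > 0" "?r ^ 2 = of_int d" using assms(1) by auto
  obtain M K where s: "s = (of_int M + of_int K * \<i> * ?r) / 2"
    using half_integral_if_square_in_ring_of_integers[OF assms] .
  obtain A B where AB: "s ^ 2 = (of_int A + of_int B * \<i> * ?r) / 2" "ring_of_integers_parity d A B"
    using assms(4) unfolding ring_of_integers_iff by blast
  have "real_of_int (M ^ 2 - d * K ^ 2) = of_int (2 * A)" "real_of_int (M * K) = of_int B"
    using AB(1) r unfolding s by (auto simp: complex_eq_iff power2_eq_square field_simps)
  then have "M ^ 2 - d * K ^ 2 = 2 * A" "M * K = B" by (simp_all only: of_int_eq_iff)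
  then have "ring_of_integers_parity d M K"
    using ring_of_integers_parity_sqrt[OF assms(2) _ _ AB(2)] by blast
  then show ?thesis unfolding ring_of_integers_iff using s by blast
qed

lemma sqrt_disc_not_in_quadratic_field:
  assumes "d > 0" "squarefree d" "is_discriminant d D"
  shows "sqrt_disc D \<notin> quadratic_field d"
proof
  assume "sqrt_disc D \<in> quadratic_field d"
  moreover have "D \<in> ring_of_integers d" "\<not> (\<exists>y \<in> ring_of_integers d. D = y ^ 2)"
    using assms(3) unfolding is_discriminant_def by auto
  ultimately show False
    using ring_of_integers_integrally_closed[OF assms(1,2)] by (metis sqrt_disc_power2)
qed

lemma quadratic_field_coordinates_unique:
  assumes "d > 0" "s \<notin> quadratic_field d"
    and "a \<in> quadratic_field d" "b \<in> quadratic_field d" "a' \<in> quadratic_field d" "b' \<in> quadratic_field d"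
    and "a + b * s = a' + b' * s"
  shows "a = a'" "b = b'"
proof -
  show "b = b'"
  proof (rule ccontr)
    assume "b \<noteq> b'"
    then have "s = (a' - a) / (b - b')" using assms(7) by (simp add: field_simps)
    moreover have "(a' - a) / (b - b') \<in> quadratic_field d"
      by (intro quadratic_field_divide quadratic_field_diff assms(1,3-6))
    ultimately show False using assms(2) by simp
  qed
  then show "a = a'" using assms(7) by simp
qed

lemma conjugate_powers_in_quadratic_field:
  assumes "d > 0" "x \<in> quadratic_field d" "y \<in> quadratic_field d" "s ^ 2 \<in> quadratic_field d"
  shows "\<exists>a \<in> quadratic_field d. \<exists>b \<in> quadratic_field d.
           (x + y * s) ^ n = a + b * s \<and> (x - y * s) ^ n = a - b * s"
proof (induction n)
  case 0
  show ?case by (intro bexI[of _ 1] bexI[of _ 0]) (simp_all add: mem_quadratic_field)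
next
  case (Suc n)
  then obtain a b where ab: "a \<in> quadratic_field d" "b \<in> quadratic_field d"
    "(x + y * s) ^ n = a + b * s" "(x - y * s) ^ n = a - b * s" by blast
  let ?a = "a * x + b * y * s ^ 2" and ?b = "a * y + b * x"
  have "(x + y * s) ^ Suc n = ?a + ?b * s" "(x - y * s) ^ Suc n = ?a - ?b * s"
    unfolding power_Suc2 ab(3,4) by (simp_all add: algebra_simps power2_eq_square)
  moreover have "?a \<in> quadratic_field d" "?b \<in> quadratic_field d"
    by (intro quadratic_field_add quadratic_field_mult assms ab(1,2))+
  ultimately show ?case by blast
qed

lemma norm_add_inverse_power2_bounds:
  fixes z :: "'a::real_normed_field"
  assumes "norm z > 1"
  shows "norm (z + inverse z) ^ 2 - 3 < norm z ^ 2" "norm z ^ 2 < norm (z + inverse z) ^ 2 + 3"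
proof -
  let ?a = "norm z" and ?b = "norm (inverse z)" and ?c = "norm (z + inverse z)"
  have b: "?b = inverse ?a" by (simp add: norm_inverse)
  have "?a * ?b = 1" using assms unfolding b by (intro right_inverse) auto
  then have square_sum: "(?a + ?b) ^ 2 = ?a ^ 2 + 2 + ?b * ?b"
    and square_diff: "(?a - ?b) ^ 2 = ?a ^ 2 - 2 + ?b * ?b"
    by (simp_all add: power2_eq_square algebra_simps)
  have "?b < 1" using assms unfolding b by (simp add: inverse_less_1_iff)
  then have "?b * ?b < 1" by (meson mult_left_le norm_ge_zero le_less_trans less_imp_le)
  moreover have "?c ^ 2 \<le> (?a + ?b) ^ 2"
    by (intro power_mono norm_triangle_ineq norm_ge_zero)
  moreover have "(?a - ?b) ^ 2 \<le> ?c ^ 2"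
    using \<open>?b < 1\<close> assms by (intro power_mono norm_diff_ineq) simp
  moreover have "0 \<le> ?b * ?b" by simp
  ultimately show "?c ^ 2 - 3 < ?a ^ 2" "?a ^ 2 < ?c ^ 2 + 3"
    unfolding square_sum square_diff by linarith+
qed

lemma eps_power_trace:
  assumes "d > 0" "squarefree d" "is_discriminant d D" "pell_solution d D t0 u0"
    and "t \<in> ring_of_integers d" "u \<in> ring_of_integers d"
    and "eps D t0 u0 ^ n = (t + u * sqrt_disc D) / 2"
  shows "t = eps D t0 u0 ^ n + inverse (eps D t0 u0 ^ n)"
proof -
  let ?s = "sqrt_disc D"
  have half: "z / 2 \<in> quadratic_field d" if "z \<in> ring_of_integers d" for z
    using that ring_of_integers_subset_quadratic_field[OF assms(1)]
    by (auto intro: quadratic_field_divide[OF assms(1)])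
  have "t0 \<in> ring_of_integers d" "u0 \<in> ring_of_integers d" "D \<in> ring_of_integers d"
    and pell: "t0 ^ 2 - u0 ^ 2 * D = 4"
    using assms(3,4) unfolding pell_solution_def is_discriminant_def by auto
  moreover have "?s ^ 2 \<in> quadratic_field d"
    using \<open>D \<in> ring_of_integers d\<close> ring_of_integers_subset_quadratic_field[OF assms(1)]
    by (auto simp: sqrt_disc_power2)
  ultimately obtain a b where ab: "a \<in> quadratic_field d" "b \<in> quadratic_field d"
    "(t0 / 2 + u0 / 2 * ?s) ^ n = a + b * ?s" "(t0 / 2 - u0 / 2 * ?s) ^ n = a - b * ?s"
    using conjugate_powers_in_quadratic_field[OF assms(1) half half] by blast
  have eps: "eps D t0 u0 = t0 / 2 + u0 / 2 * ?s" unfolding eps_def by (simp add: add_divide_distrib)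
  have "eps D t0 u0 * (t0 / 2 - u0 / 2 * ?s) = 1"
    using pell sqrt_disc_power2[of D] unfolding eps by (simp add: power2_eq_square algebra_simps)
  then have conj: "t0 / 2 - u0 / 2 * ?s = inverse (eps D t0 u0)" by (simp add: inverse_unique)
  have "t / 2 + u / 2 * ?s = a + b * ?s"
    using assms(7) ab(3) unfolding eps by (simp add: add_divide_distrib)
  then have "t / 2 = a"
    using quadratic_field_coordinates_unique(1)[OF assms(1) sqrt_disc_not_in_quadratic_field[OF assms(1-3)]]
      half[OF assms(5)] half[OF assms(6)] ab(1,2) by blast
  then show ?thesis using ab(3,4) unfolding eps conj power_inverse by simp
qed

theorem proposition3p3:
  fixes d :: int and D t0 u0 :: complex
  assumes "d > 0" and "squarefree d"
    and "is_discriminant d D"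
    and "fundamental_solution d D t0 u0"
  shows "\<forall>(n::nat) t u. t \<in> ring_of_integers d \<and> u \<in> ring_of_integers d
           \<and> eps D t0 u0 ^ (n + 1) = (t + u * sqrt_disc D) / 2
         \<longrightarrow> cmod t ^ 2 - 3 < cmod (eps D t0 u0) ^ (2 * (n + 1))
           \<and> cmod (eps D t0 u0) ^ (2 * (n + 1)) < cmod t ^ 2 + 3"
proof (intro allI impI)
  fix n :: nat and t u
  assume "t \<in> ring_of_integers d \<and> u \<in> ring_of_integers d
           \<and> eps D t0 u0 ^ (n + 1) = (t + u * sqrt_disc D) / 2"
  moreover have "pell_solution d D t0 u0" and eps_gt_1: "cmod (eps D t0 u0) > 1"
    using assms(4) unfolding fundamental_solution_def by auto
  moreover define z where "z = eps D t0 u0 ^ (n + 1)"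
  ultimately have t: "t = z + inverse z" using eps_power_trace[OF assms(1-3)] by blast
  have z_gt_1: "norm z > 1" unfolding z_def norm_power by (rule one_less_power[OF eps_gt_1]) simp
  have power_eq: "cmod (eps D t0 u0) ^ (2 * (n + 1)) = norm z ^ 2"
    unfolding z_def norm_power by (simp only: power_mult[symmetric] mult.commute)
  show "cmod t ^ 2 - 3 < cmod (eps D t0 u0) ^ (2 * (n + 1))
           \<and> cmod (eps D t0 u0) ^ (2 * (n + 1)) < cmod t ^ 2 + 3"
    unfolding t power_eq using norm_add_inverse_power2_bounds[OF z_gt_1] by simp
qed

end
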